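(* Let $f:\mathbb{R}\to\mathbb{R}$ be given by $f(t):=\sum_{n=1}^\infty\frac1n\sin^2(t/2^n)$. Then $f$ is not quasi-asymptotically almost periodic; that is, it is false that for every $\epsilon>0$ there is $l>0$ such that every interval of length $l$ contains a number $\tau$ for which there exists $M(\epsilon,\tau)>0$ with $|f(t+\tau)-f(t)|\le\epsilon$ for all $|t|\ge M(\epsilon,\tau)$.
   Context: Known facts (may be used): $f$ is well defined, uniformly continuous, unbounded, and for each $\tau\in\mathbb{R}$ the function $t\mapsto f(t+\tau)-f(t)$ is (Bohr) almost periodic. *)

theory Defs
  imports "HOL-Analysis.Analysis"
begin

definition fex :: "real \<Rightarrow> real" where
  "fex t = (\<Sum>n. (1 / real (Suc n)) * (sin (t / 2 ^ Suc n))\<^sup>2)"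

definition quasi_asymptotically_almost_periodic :: "(real \<Rightarrow> real) \<Rightarrow> bool" where
  "quasi_asymptotically_almost_periodic g \<longleftrightarrow>
     (\<forall>\<epsilon>>0. \<exists>l>0. \<forall>a. \<exists>\<tau>\<in>{a..a+l}. \<exists>M>0.
        \<forall>t. \<bar>t\<bar> \<ge> M \<longrightarrow> \<bar>g (t + \<tau>) - g t\<bar> \<le> \<epsilon>)"

end

theory Submission imports Defs "HOL-Analysis.Harmonic_Numbers" begin

text \<open>Take \<open>\<epsilon> = 1\<close> and let \<open>l\<close> be the corresponding inclusion length. At
  \<open>t = 2\<^sup>N\<pi>\<close> the first \<open>N\<close> summands of \<open>fex\<close> vanish and the rest form a geometric
  tail, so \<open>fex t \<le> 16/3\<close> for every \<open>N\<close>. On the other hand, every admissible shift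
  \<open>\<tau> \<in> [2\<^sup>K\<pi>/3, 2\<^sup>K\<pi>/3 + l]\<close> satisfies, for \<open>m \<le> n < K\<close> with \<open>2\<^sup>m > 8l\<close>,
  \<open>(t + \<tau>)/2\<^sup>n\<^sup>+\<^sup>1 \<equiv> r\<pi>/3 + e (mod \<pi>)\<close> with \<open>r \<in> {1, 2}\<close> (as \<open>2\<^sup>j mod 3 \<noteq> 0\<close>) and
  \<open>0 \<le> e < 1/8\<close>, so these summands are at least \<open>1/(2(n+1))\<close>. Their sum is half a
  block of the divergent harmonic series, which can be made \<open>\<ge> 8\<close>; hence
  \<open>|fex (t + \<tau>) - fex t| > 1\<close> for arbitrarily large \<open>t\<close>.\<close>

definition fex_term :: "real \<Rightarrow> nat \<Rightarrow> real" where
  "fex_term t n = (1 / real (Suc n)) * (sin (t / 2 ^ Suc n))\<^sup>2"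

lemma fex_eq_suminf: "fex t = (\<Sum>n. fex_term t n)"
  unfolding fex_def fex_term_def ..

lemma sin_square_add_multiple_pi: "(sin (x + real k * pi))\<^sup>2 = (sin x)\<^sup>2"
  by (simp add: sin_add power_mult_distrib flip: power_mult)

lemma sin_square_ge_half:
  assumes "pi/4 \<le> x" "x \<le> 3*pi/4"
  shows "1/2 \<le> (sin x)\<^sup>2"
proof -
  have "cos (2*x - pi) \<ge> 0" using assms by (intro cos_ge_zero) auto
  hence "cos (2*x) \<le> 0" by (simp add: cos_diff)
  thus ?thesis by (simp add: cos_double_sin)
qed

lemma power_two_mod_three: "(2::nat)^j mod 3 \<in> {1, 2}"
proof (induction j)
  case (Suc j)
  have "(2::nat)^Suc j mod 3 = (2 * (2^j mod 3)) mod 3" by (simp add: mod_mult_right_eq)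
  with Suc show ?case by auto
qed simp

lemma sin_square_div_power_two_le: "(sin ((x::real) / 2 ^ Suc n))\<^sup>2 \<le> x\<^sup>2 * (1/4)^Suc n"
proof -
  have "(sin (x / 2 ^ Suc n))\<^sup>2 \<le> (x / 2 ^ Suc n)\<^sup>2"
    using abs_sin_x_le_abs_x[of "x / 2 ^ Suc n"] by (metis abs_ge_zero power2_abs power_mono)
  also have "\<dots> = x\<^sup>2 / 4^Suc n"
    by (simp add: power_divide power2_eq_square flip: power_mult_distrib)
  also have "\<dots> = x\<^sup>2 * (1/4)^Suc n"
    by (simp add: power_one_over)
  finally show ?thesis .
qed

lemma fex_term_nonneg: "0 \<le> fex_term t n"
  by (simp add: fex_term_def)

lemma fex_term_le: "fex_term t n \<le> t\<^sup>2 * (1/4)^Suc n"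
proof -
  have "fex_term t n \<le> (sin (t / 2 ^ Suc n))\<^sup>2"
    unfolding fex_term_def by (intro mult_left_le_one_le) auto
  also have "\<dots> \<le> t\<^sup>2 * (1/4)^Suc n" by (rule sin_square_div_power_two_le)
  finally show ?thesis .
qed

lemma summable_fex_term: "summable (fex_term t)"
  by (rule summable_comparison_test[of _ "\<lambda>n. t\<^sup>2 * (1/4)^Suc n"])
     (use fex_term_nonneg fex_term_le in auto)

lemma sin_square_add_power_two_pi:
  assumes "n < N"
  shows "(sin ((2^N * pi + x) / 2 ^ Suc n))\<^sup>2 = (sin (x / 2 ^ Suc n))\<^sup>2"
proof -
  have "(2::real)^N = 2^(N - Suc n) * 2^Suc n"
    using assms by (metis Suc_leI le_add_diff_inverse2 power_add)
  hence "(2^N * pi + x) / 2 ^ Suc n = x / 2 ^ Suc n + real (2^(N - Suc n)) * pi"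
    by (simp add: field_simps)
  thus ?thesis by (simp only: sin_square_add_multiple_pi)
qed

lemma fex_power_two_pi_le: "fex (2^N * pi) \<le> 16/3"
proof -
  let ?g = "fex_term (2^N * pi)"
  have head: "?g i = 0" if "i < N" for i
    using sin_square_add_power_two_pi[OF that, of 0] by (simp add: fex_term_def)
  have tail: "?g (n + N) \<le> pi\<^sup>2 * (1/4)^Suc n" for n
  proof -
    have arg: "2^N * pi / 2 ^ Suc (n + N) = pi / 2 ^ Suc n" by (simp add: power_add)
    have "?g (n + N) \<le> (sin (pi / 2 ^ Suc n))\<^sup>2"
      unfolding fex_term_def arg by (intro mult_left_le_one_le) auto
    also have "\<dots> \<le> pi\<^sup>2 * (1/4)^Suc n" by (rule sin_square_div_power_two_le)
    finally show ?thesis .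
  qed
  have "fex (2^N * pi) = (\<Sum>n. ?g (n + N)) + (\<Sum>i<N. ?g i)"
    unfolding fex_eq_suminf by (rule suminf_split_initial_segment[OF summable_fex_term])
  also have "(\<Sum>i<N. ?g i) = 0" using head by simp
  also have "(\<Sum>n. ?g (n + N)) \<le> (\<Sum>n. pi\<^sup>2 * (1/4)^Suc n)"
    using tail summable_ignore_initial_segment[OF summable_fex_term] by (intro suminf_le) auto
  also have "(\<Sum>n. pi\<^sup>2 * (1/4::real)^Suc n) = pi\<^sup>2 / 4 * (\<Sum>n. (1/4::real)^n)"
    by (subst suminf_mult[symmetric]) (auto simp: mult_ac)
  also have "\<dots> = pi\<^sup>2 / 3" by (subst suminf_geometric) auto
  also have "\<dots> \<le> 16/3"
    using pi_less_4 pi_gt_zero power_strict_mono[of pi 4 2] by simp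
  finally show ?thesis by simp
qed

lemma sin_square_third_power_two_ge_half:
  assumes "n < K" "0 \<le> \<delta>" "8 * \<delta> < 2 ^ Suc n"
  shows "1/2 \<le> (sin ((2^K * pi / 3 + \<delta>) / 2 ^ Suc n))\<^sup>2"
proof -
  define j where "j = K - Suc n"
  define q where "q = (2::nat)^j div 3"
  define r where "r = (2::nat)^j mod 3"
  define e where "e = \<delta> / 2 ^ Suc n"
  have r: "r = 1 \<or> r = 2" using power_two_mod_three unfolding r_def by auto
  have e: "0 \<le> e" "e < 1/8" using assms by (auto simp: e_def field_simps)
  have "(2::real)^K = 2^j * 2^Suc n"
    using assms unfolding j_def by (metis Suc_leI le_add_diff_inverse2 power_add)
  also have "(2::real)^j = 3 * real q + real r"
    unfolding q_def r_def by (metis div_mult_mod_eq of_nat_add of_nat_mult of_nat_numeral of_nat_power mult.commute)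
  finally have "(2^K * pi / 3 + \<delta>) / 2 ^ Suc n = (real r * pi / 3 + e) + real q * pi"
    by (simp add: e_def field_simps)
  hence "(sin ((2^K * pi / 3 + \<delta>) / 2 ^ Suc n))\<^sup>2 = (sin (real r * pi / 3 + e))\<^sup>2"
    by (simp only: sin_square_add_multiple_pi)
  moreover have "1/2 \<le> (sin (real r * pi / 3 + e))\<^sup>2"
    using r e pi_gt3 by (intro sin_square_ge_half) auto
  ultimately show ?thesis by simp
qed

lemma fex_ge_half_harm_diff:
  assumes "m \<le> K" and big: "\<And>n. m \<le> n \<Longrightarrow> n < K \<Longrightarrow> 1/2 \<le> (sin (t / 2 ^ Suc n))\<^sup>2"
  shows "(harm K - harm m) / 2 \<le> fex t"
proof -
  have "harm K - harm m = (\<Sum>n\<in>{m..<K}. inverse (real (Suc n)))"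
    unfolding harm_altdef lessThan_atLeast0 using assms(1) by (intro sum_diff_nat_ivl) auto
  hence "(harm K - harm m) / 2 = (\<Sum>n\<in>{m..<K}. inverse (real (Suc n)) / 2)"
    by (simp add: sum_divide_distrib)
  also have "\<dots> \<le> (\<Sum>n\<in>{m..<K}. fex_term t n)"
  proof (rule sum_mono)
    fix n assume "n \<in> {m..<K}"
    hence "1/2 \<le> (sin (t / 2 ^ Suc n))\<^sup>2" using big by simp
    hence "1 / real (Suc n) * (1/2) \<le> fex_term t n"
      unfolding fex_term_def by (rule mult_left_mono) simp
    thus "inverse (real (Suc n)) / 2 \<le> fex_term t n" by (simp add: inverse_eq_divide)
  qed
  also have "\<dots> \<le> fex t"
    unfolding fex_eq_suminf
    by (rule sum_le_suminf[OF summable_fex_term]) (simp_all add: fex_term_nonneg)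
  finally show ?thesis .
qed

lemma fex_ge_half_harm_diff_at_shift:
  assumes "m \<le> K" "K \<le> N" "0 \<le> \<delta>" "8 * \<delta> < 2^m"
  shows "(harm K - harm m) / 2 \<le> fex (2^N * pi + (2^K * pi / 3 + \<delta>))"
proof (rule fex_ge_half_harm_diff[OF \<open>m \<le> K\<close>])
  fix n assume "m \<le> n" "n < K"
  have "8 * \<delta> < 2^m" by fact
  also have "\<dots> \<le> 2 ^ Suc n" using \<open>m \<le> n\<close> by (intro power_increasing) auto
  finally have "1/2 \<le> (sin ((2^K * pi / 3 + \<delta>) / 2 ^ Suc n))\<^sup>2"
    by (rule sin_square_third_power_two_ge_half[OF \<open>n < K\<close> \<open>0 \<le> \<delta>\<close>])
  moreover have "n < N" using \<open>n < K\<close> \<open>K \<le> N\<close> by simp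
  ultimately show "1/2 \<le> (sin ((2^N * pi + (2^K * pi / 3 + \<delta>)) / 2 ^ Suc n))\<^sup>2"
    by (simp only: sin_square_add_power_two_pi)
qed

lemma harm_gap: "\<exists>K\<ge>m. harm m + c \<le> (harm K :: real)"
proof -
  have "\<forall>\<^sub>F K in sequentially. harm m + c \<le> (harm K :: real)"
    using harm_at_top by (simp add: filterlim_at_top)
  then obtain K0 where "\<And>K. K \<ge> K0 \<Longrightarrow> harm m + c \<le> (harm K :: real)"
    by (auto simp: eventually_sequentially)
  thus ?thesis by (intro exI[of _ "max m K0"]) auto
qed

theorem mainTheorem5:
  shows "\<not> quasi_asymptotically_almost_periodic fex"
proof
  assume "quasi_asymptotically_almost_periodic fex"
  then obtain l where incl: "\<And>a. \<exists>\<tau>\<in>{a..a+l}. \<exists>M>0.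
      \<forall>t. \<bar>t\<bar> \<ge> M \<longrightarrow> \<bar>fex (t + \<tau>) - fex t\<bar> \<le> 1"
    unfolding quasi_asymptotically_almost_periodic_def by (meson zero_less_one)
  obtain m :: nat where m: "8 * l < 2^m" using real_arch_pow[of 2 "8 * l"] by auto
  obtain K where "m \<le> K" and K: "harm m + 16 \<le> (harm K :: real)" using harm_gap by blast
  obtain \<tau> M where \<tau>: "\<tau> \<in> {2^K * pi / 3 .. 2^K * pi / 3 + l}"
    and shift: "\<And>t. \<bar>t\<bar> \<ge> M \<Longrightarrow> \<bar>fex (t + \<tau>) - fex t\<bar> \<le> 1"
    using incl by blast
  define \<delta> where "\<delta> = \<tau> - 2^K * pi / 3"
  have \<tau>_eq: "\<tau> = 2^K * pi / 3 + \<delta>" and "0 \<le> \<delta>" and "8 * \<delta> < 2^m"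
    using \<tau> m by (auto simp: \<delta>_def)
  obtain N' :: nat where "M < 2^N'" using real_arch_pow[of 2 M] by auto
  define N where "N = max K N'"
  have "M < 2^N'" by fact
  also have "\<dots> \<le> 2^N" by (rule power_increasing) (simp_all add: N_def)
  also have "\<dots> \<le> 2^N * pi" using pi_gt3 by simp
  finally have close: "\<bar>fex (2^N * pi + \<tau>) - fex (2^N * pi)\<bar> \<le> 1" by (intro shift) simp
  have "(harm K - harm m) / 2 \<le> fex (2^N * pi + \<tau>)"
    unfolding \<tau>_eq using \<open>m \<le> K\<close> \<open>0 \<le> \<delta>\<close> \<open>8 * \<delta> < 2^m\<close>
    by (intro fex_ge_half_harm_diff_at_shift) (simp_all add: N_def)
  with K close fex_power_two_pi_le[of N] show False by (simp add: abs_le_iff field_simps)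
qed

end
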